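(* Suppose $C(X)_\mathcal{P}$ contains the characteristic function $\chi_{\{x\}}$ for every $x\in X$. Then: (1) every free ideal and every essential ideal of $C(X)_\mathcal{P}$ has depth zero; (2) every maximal ideal of $C(X)_\mathcal{P}$ has depth zero; (3) every prime ideal of $C(X)_\mathcal{P}$ has depth zero.
   Context: Let $(X,\tau)$ be a $T_1$ topological space and $\mathcal{P}$ an ideal of closed subsets of $X$ (a nonempty family of closed sets closed under finite unions and under taking closed subsets). For $f\colon X\to\mathbb{R}$, $D_f$ denotes the set of points of discontinuity of $f$, and $C(X)_\mathcal{P}=\{f\colon X\to\mathbb{R} : \overline{D_f}\in\mathcal{P}\}$, a commutative ring with unity under pointwise operations. For $f\in C(X)_\mathcal{P}$, $Z_\mathcal{P}(f)=\{x: f(x)=0\}$; an ideal $I$ is free if $\bigcap\{Z_\mathcal{P}(f): f\in I\}=\emptyset$. An ideal is essential if it intersects every nonzero ideal nontrivially. For an ideal $I$ regarded as a $C(X)_\mathcal{P}$-module $M$, an element $a$ is $M$-regular if $am\neq 0$ for all $m\in M\setminus\{0\}$; a sequence $a_1,\dots,a_n$ is $I$-regular if $a_1$ is $I$-regular, each $a_k$ is $I/(a_1I+\dots+a_{k-1}I)$-regular, and $a_1I+\dots+a_nI\neq I$; the depth of $I$ is the length of a maximal $I$-regular sequence. *)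

theory Defs
  imports "HOL-Analysis.Analysis"
begin

text \<open>The T1 space X is the type 'a of class t1_space (so X = UNIV).\<close>

definition disc :: "('a::topological_space \<Rightarrow> real) \<Rightarrow> 'a set" where
  "disc f = {x. \<not> (f \<longlongrightarrow> f x) (at x)}"

definition closed_set_ideal :: "'a::topological_space set set \<Rightarrow> bool" where
  "closed_set_ideal P \<longleftrightarrow> P \<noteq> {} \<and> (\<forall>A\<in>P. closed A) \<and>
     (\<forall>A\<in>P. \<forall>B\<in>P. A \<union> B \<in> P) \<and>
     (\<forall>A\<in>P. \<forall>B. closed B \<and> B \<subseteq> A \<longrightarrow> B \<in> P)"

definition CP :: "'a::topological_space set set \<Rightarrow> ('a \<Rightarrow> real) set" where
  "CP P = {f. closure (disc f) \<in> P}"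

definition Zset :: "('a \<Rightarrow> real) \<Rightarrow> 'a set" where
  "Zset f = {x. f x = 0}"

definition ring_ideal :: "'a::topological_space set set \<Rightarrow> ('a \<Rightarrow> real) set \<Rightarrow> bool" where
  "ring_ideal P I \<longleftrightarrow> I \<subseteq> CP P \<and> (\<lambda>x. 0) \<in> I \<and>
     (\<forall>f\<in>I. \<forall>g\<in>I. (\<lambda>x. f x - g x) \<in> I) \<and>
     (\<forall>r\<in>CP P. \<forall>f\<in>I. (\<lambda>x. r x * f x) \<in> I)"

definition free_ideal :: "'a::topological_space set set \<Rightarrow> ('a \<Rightarrow> real) set \<Rightarrow> bool" where
  "free_ideal P I \<longleftrightarrow> ring_ideal P I \<and> (\<Inter>f\<in>I. Zset f) = {}"

definition essential_ideal :: "'a::topological_space set set \<Rightarrow> ('a \<Rightarrow> real) set \<Rightarrow> bool" where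
  "essential_ideal P I \<longleftrightarrow> ring_ideal P I \<and>
     (\<forall>J. ring_ideal P J \<and> J \<noteq> {\<lambda>x. 0} \<longrightarrow> I \<inter> J \<noteq> {\<lambda>x. 0})"

definition maximal_ideal :: "'a::topological_space set set \<Rightarrow> ('a \<Rightarrow> real) set \<Rightarrow> bool" where
  "maximal_ideal P I \<longleftrightarrow> ring_ideal P I \<and> I \<noteq> CP P \<and>
     (\<forall>J. ring_ideal P J \<and> I \<subseteq> J \<longrightarrow> J = I \<or> J = CP P)"

definition prime_ideal :: "'a::topological_space set set \<Rightarrow> ('a \<Rightarrow> real) set \<Rightarrow> bool" where
  "prime_ideal P I \<longleftrightarrow> ring_ideal P I \<and> I \<noteq> CP P \<and>
     (\<forall>f\<in>CP P. \<forall>g\<in>CP P. (\<lambda>x. f x * g x) \<in> I \<longrightarrow> f \<in> I \<or> g \<in> I)"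

definition submod :: "('a \<Rightarrow> real) set \<Rightarrow> ('a \<Rightarrow> real) list \<Rightarrow> ('a \<Rightarrow> real) set" where
  "submod I as = {(\<lambda>x. \<Sum>i<length as. (as ! i) x * ms i x) | ms.
                    \<forall>i<length as. ms i \<in> I}"

text \<open>a is (I/N)-regular: a*m is nonzero in I/N whenever m is nonzero in I/N.\<close>
definition quot_regular :: "('a \<Rightarrow> real) set \<Rightarrow> ('a \<Rightarrow> real) set \<Rightarrow> ('a \<Rightarrow> real) \<Rightarrow> bool" where
  "quot_regular I N a \<longleftrightarrow> (\<forall>m\<in>I. m \<notin> N \<longrightarrow> (\<lambda>x. a x * m x) \<notin> N)"

definition regular_seq :: "'a::topological_space set set \<Rightarrow> ('a \<Rightarrow> real) set \<Rightarrow> ('a \<Rightarrow> real) list \<Rightarrow> bool" where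
  "regular_seq P I as \<longleftrightarrow> set as \<subseteq> CP P \<and>
     (\<forall>k<length as. quot_regular I (submod I (take k as)) (as ! k)) \<and>
     submod I as \<noteq> I"

text \<open>Depth zero: the empty sequence is a maximal I-regular sequence,
  i.e. there is no nonempty I-regular sequence.\<close>
definition depth_zero :: "'a::topological_space set set \<Rightarrow> ('a \<Rightarrow> real) set \<Rightarrow> bool" where
  "depth_zero P I \<longleftrightarrow> \<not> (\<exists>as. as \<noteq> [] \<and> regular_seq P I as)"

end

theory Submission
  imports Defs
begin

text \<open>Let a be the head of an I-regular sequence. If a x = 0, then for f \<in> I the element
  \<chi>_x f of I is annihilated by a, so regularity forces f x = 0. If a had no zero, 1/a would
  lie in C(X)_P and a I = I, which a regular sequence excludes; hence I lies in the ideal M_x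
  of functions vanishing at some zero x of a. This rules out free ideals at once, and essential
  ones because I meets the ideal generated by \<chi>_x trivially. Maximal and prime ideals (the
  latter since \<chi>_x (1 - \<chi>_x) = 0) must equal M_x. In M_x itself every \<chi>_y with
  y \<noteq> x lies in M_x, so x is the only zero of a; then a + \<chi>_x is a unit agreeing with a
  off the common zero x, and again a I = I.\<close>

lemma disc_add: "disc (\<lambda>x. f x + g x) \<subseteq> disc f \<union> disc g"
  unfolding disc_def using tendsto_add by blast

lemma disc_diff: "disc (\<lambda>x. f x - g x) \<subseteq> disc f \<union> disc g"
  unfolding disc_def using tendsto_diff by blast

lemma disc_mult: "disc (\<lambda>x. f x * g x) \<subseteq> disc f \<union> disc g"
  unfolding disc_def using tendsto_mult by blast

lemma disc_inverse:
  assumes "\<forall>x. f x \<noteq> 0"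
  shows "disc (\<lambda>x. inverse (f x)) \<subseteq> disc f"
  unfolding disc_def using tendsto_inverse assms by blast

lemma CP_if_disc_subset:
  assumes P: "closed_set_ideal P" and "f \<in> CP P" "g \<in> CP P" and "disc h \<subseteq> disc f \<union> disc g"
  shows "h \<in> CP P"
proof -
  have "closure (disc f) \<union> closure (disc g) \<in> P"
    using assms(1-3) unfolding closed_set_ideal_def CP_def by blast
  moreover have "closure (disc h) \<subseteq> closure (disc f) \<union> closure (disc g)"
    using closure_mono[OF assms(4)] by (simp add: closure_Un)
  ultimately show ?thesis
    using P unfolding closed_set_ideal_def CP_def by blast
qed

lemma CP_const:
  fixes P :: "'a::topological_space set set"
  assumes "closed_set_ideal P"
  shows "(\<lambda>x. c) \<in> CP P"
proof -
  have "disc (\<lambda>x::'a. c) = {}"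
    by (simp add: disc_def)
  moreover have "{} \<in> P"
    using assms unfolding closed_set_ideal_def by blast
  ultimately show ?thesis
    unfolding CP_def by simp
qed

lemma CP_add:
  assumes "closed_set_ideal P" "f \<in> CP P" "g \<in> CP P"
  shows "(\<lambda>x. f x + g x) \<in> CP P"
  using CP_if_disc_subset[OF assms disc_add] .

lemma CP_diff:
  assumes "closed_set_ideal P" "f \<in> CP P" "g \<in> CP P"
  shows "(\<lambda>x. f x - g x) \<in> CP P"
  using CP_if_disc_subset[OF assms disc_diff] .

lemma CP_mult:
  assumes "closed_set_ideal P" "f \<in> CP P" "g \<in> CP P"
  shows "(\<lambda>x. f x * g x) \<in> CP P"
  using CP_if_disc_subset[OF assms disc_mult] .

lemma CP_inverse:
  assumes "closed_set_ideal P" "f \<in> CP P" "\<forall>x. f x \<noteq> 0"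
  shows "(\<lambda>x. inverse (f x)) \<in> CP P"
  using CP_if_disc_subset[OF assms(1,2,2)] disc_inverse[OF assms(3)] by simp

lemma ring_ideal_subset: "ring_ideal P I \<Longrightarrow> I \<subseteq> CP P"
  unfolding ring_ideal_def by blast

lemma ring_ideal_zero: "ring_ideal P I \<Longrightarrow> (\<lambda>x. 0) \<in> I"
  unfolding ring_ideal_def by blast

lemma ring_ideal_diff: "ring_ideal P I \<Longrightarrow> f \<in> I \<Longrightarrow> g \<in> I \<Longrightarrow> (\<lambda>x. f x - g x) \<in> I"
  unfolding ring_ideal_def by blast

lemma ring_ideal_mult: "ring_ideal P I \<Longrightarrow> r \<in> CP P \<Longrightarrow> f \<in> I \<Longrightarrow> (\<lambda>x. r x * f x) \<in> I"
  unfolding ring_ideal_def by blast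

lemma ring_ideal_add:
  assumes "ring_ideal P I" "f \<in> I" "g \<in> I"
  shows "(\<lambda>x. f x + g x) \<in> I"
proof -
  have "(\<lambda>x. f x - (0 - g x)) \<in> I"
    using ring_ideal_diff[OF assms(1,2) ring_ideal_diff[OF assms(1) ring_ideal_zero[OF assms(1)] assms(3)]] .
  then show ?thesis
    by simp
qed

lemma submod_subset:
  assumes I: "ring_ideal P I" and "set as \<subseteq> CP P"
  shows "submod I as \<subseteq> I"
proof
  fix h assume "h \<in> submod I as"
  then obtain ms where ms: "\<forall>i<length as. ms i \<in> I"
    and h: "h = (\<lambda>x. \<Sum>i<length as. (as ! i) x * ms i x)"
    unfolding submod_def by blast
  have "n \<le> length as \<Longrightarrow> (\<lambda>x. \<Sum>i<n. (as ! i) x * ms i x) \<in> I" for n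
  proof (induction n)
    case 0
    then show ?case
      using ring_ideal_zero[OF I] by simp
  next
    case (Suc n)
    have "as ! n \<in> CP P"
      using Suc.prems assms(2) nth_mem by (metis Suc_le_lessD subsetD)
    moreover have "ms n \<in> I"
      using ms Suc.prems by simp
    ultimately have "(\<lambda>x. (as ! n) x * ms n x) \<in> I"
      by (rule ring_ideal_mult[OF I])
    with ring_ideal_add[OF I Suc.IH] Suc.prems show ?case
      by simp
  qed
  then show "h \<in> I"
    using h by blast
qed

lemma hd_mult_in_submod:
  assumes "ring_ideal P I" "as \<noteq> []" "g \<in> I"
  shows "(\<lambda>x. hd as x * g x) \<in> submod I as"
proof -
  define ms where "ms = (\<lambda>i::nat. if i = 0 then g else (\<lambda>x. 0))"
  have "\<forall>i<length as. ms i \<in> I"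
    using assms(3) ring_ideal_zero[OF assms(1)] unfolding ms_def by auto
  moreover have "(\<Sum>i<length as. (as ! i) x * ms i x) = hd as x * g x" for x
  proof -
    have "(\<Sum>i<length as. (as ! i) x * ms i x) = (\<Sum>i<length as. if i = 0 then (as ! 0) x * g x else 0)"
      by (rule sum.cong) (auto simp: ms_def)
    then show ?thesis
      using assms(2) by (simp add: hd_conv_nth)
  qed
  ultimately show ?thesis
    unfolding submod_def by force
qed

lemma regular_seq_hd_regular:
  assumes "regular_seq P I as" "as \<noteq> []" "m \<in> I" "(\<lambda>x. hd as x * m x) = (\<lambda>x. 0)"
  shows "m = (\<lambda>x. 0)"
proof -
  have "quot_regular I (submod I (take 0 as)) (as ! 0)"
    using assms(1,2) unfolding regular_seq_def by blast
  moreover have "submod I [] = {\<lambda>x. 0}"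
    unfolding submod_def by auto
  ultimately show ?thesis
    using assms(2-4) unfolding quot_regular_def by (auto simp: hd_conv_nth)
qed

lemma regular_seq_hd_in_CP:
  assumes "regular_seq P I as" "as \<noteq> []"
  shows "hd as \<in> CP P"
  using assms hd_in_set unfolding regular_seq_def by blast

lemma regular_seq_hd_not_unit_off_common_zeros:
  assumes P: "closed_set_ideal P" and I: "ring_ideal P I"
    and rs: "regular_seq P I as" and ne: "as \<noteq> []"
    and "b \<in> CP P" "\<forall>y. b y \<noteq> 0" and agree: "\<forall>y. hd as y = b y \<or> (\<forall>f\<in>I. f y = 0)"
  shows False
proof -
  have "I \<subseteq> submod I as"
  proof
    fix f assume f: "f \<in> I"
    have "(\<lambda>y. inverse (b y) * f y) \<in> I"
      using ring_ideal_mult[OF I CP_inverse[OF P assms(5,6)] f] .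
    then have "(\<lambda>y. hd as y * (inverse (b y) * f y)) \<in> submod I as"
      by (rule hd_mult_in_submod[OF I ne])
    moreover have "hd as y * (inverse (b y) * f y) = f y" for y
    proof (cases "hd as y = b y")
      case True
      then show ?thesis
        using assms(6) by simp
    next
      case False
      then have "f y = 0"
        using agree f by blast
      then show ?thesis
        by simp
    qed
    then have "(\<lambda>y. hd as y * (inverse (b y) * f y)) = f"
      by (rule ext)
    ultimately show "f \<in> submod I as"
      by simp
  qed
  moreover have "set as \<subseteq> CP P" "submod I as \<noteq> I"
    using rs unfolding regular_seq_def by auto
  ultimately show False
    using submod_subset[OF I] by blast
qed

lemma ideal_vanishes_at_zero_of_regular_seq_hd:
  assumes I: "ring_ideal P I" and "indicator {x} \<in> CP P"
    and rs: "regular_seq P I as" and ne: "as \<noteq> []" and "hd as x = 0" and "f \<in> I"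
  shows "f x = 0"
proof -
  let ?h = "\<lambda>y. indicator {x} y * f y"
  have "?h \<in> I"
    using ring_ideal_mult[OF I assms(2,6)] .
  moreover have "(\<lambda>y. hd as y * ?h y) = (\<lambda>y. 0)"
    using assms(5) by (auto simp: fun_eq_iff indicator_def)
  ultimately have "?h = (\<lambda>y. 0)"
    by (rule regular_seq_hd_regular[OF rs ne])
  then show ?thesis
    by (metis indicator_simps(1) insertI1 mult_1)
qed

lemma regular_seq_common_zero:
  assumes P: "closed_set_ideal P" and chi: "\<forall>x. indicator {x} \<in> CP P"
    and I: "ring_ideal P I" and rs: "regular_seq P I as" and ne: "as \<noteq> []"
  shows "\<exists>x. hd as x = 0 \<and> (\<forall>f\<in>I. f x = 0)"
proof (cases "\<forall>y. hd as y \<noteq> 0")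
  case True
  with regular_seq_hd_not_unit_off_common_zeros[OF P I rs ne regular_seq_hd_in_CP[OF rs ne]]
  show ?thesis
    by blast
next
  case False
  then show ?thesis
    using ideal_vanishes_at_zero_of_regular_seq_hd[OF I chi[rule_format] rs ne] by blast
qed

definition vanishing_ideal :: "'a::topological_space set set \<Rightarrow> 'a \<Rightarrow> ('a \<Rightarrow> real) set" where
  "vanishing_ideal P x = {f \<in> CP P. f x = 0}"

lemma ring_ideal_vanishing_ideal:
  assumes "closed_set_ideal P"
  shows "ring_ideal P (vanishing_ideal P x)"
  unfolding ring_ideal_def vanishing_ideal_def
proof (intro conjI ballI)
  show "(\<lambda>x. 0) \<in> {f \<in> CP P. f x = 0}"
    using CP_const[OF assms] by simp
next
  fix f g assume "f \<in> {f \<in> CP P. f x = 0}" "g \<in> {f \<in> CP P. f x = 0}"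
  then show "(\<lambda>x. f x - g x) \<in> {f \<in> CP P. f x = 0}"
    using CP_diff[OF assms, of f g] by simp
next
  fix r f assume "r \<in> CP P" "f \<in> {f \<in> CP P. f x = 0}"
  then show "(\<lambda>x. r x * f x) \<in> {f \<in> CP P. f x = 0}"
    using CP_mult[OF assms, of r f] by simp
qed blast

lemma depth_zero_vanishing_ideal:
  assumes P: "closed_set_ideal P" and chi: "\<forall>x. indicator {x} \<in> CP P"
  shows "depth_zero P (vanishing_ideal P x)"
  unfolding depth_zero_def
proof clarify
  fix as assume ne: "as \<noteq> []" and rs: "regular_seq P (vanishing_ideal P x) as"
  let ?I = "vanishing_ideal P x"
  have I: "ring_ideal P ?I"
    by (rule ring_ideal_vanishing_ideal[OF P])
  have zero_only_at_x: "y = x" if "hd as y = 0" for y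
  proof (rule ccontr)
    assume "y \<noteq> x"
    then have "indicator {y} \<in> ?I"
      using chi unfolding vanishing_ideal_def by simp
    then have "indicator {y} y = (0::real)"
      by (rule ideal_vanishes_at_zero_of_regular_seq_hd[OF I chi[rule_format] rs ne that])
    then show False
      by simp
  qed
  then have "hd as x = 0"
    using regular_seq_common_zero[OF P chi I rs ne] by blast
  let ?b = "\<lambda>y. hd as y + indicator {x} y"
  have "?b \<in> CP P"
    using CP_add[OF P regular_seq_hd_in_CP[OF rs ne] chi[rule_format]] .
  moreover have "\<forall>y. ?b y \<noteq> 0"
  proof
    fix y
    show "?b y \<noteq> 0"
    proof (cases "y = x")
      case True
      then show ?thesis
        using \<open>hd as x = 0\<close> by simp
    next
      case False
      then have "hd as y \<noteq> 0"
        using zero_only_at_x by blast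
      with False show ?thesis
        by simp
    qed
  qed
  moreover have "\<forall>y. hd as y = ?b y \<or> (\<forall>f\<in>?I. f y = 0)"
    by (auto simp: indicator_def vanishing_ideal_def)
  ultimately show False
    by (rule regular_seq_hd_not_unit_off_common_zeros[OF P I rs ne])
qed

lemma depth_zero_if_free:
  assumes "closed_set_ideal P" "\<forall>x. indicator {x} \<in> CP P" "free_ideal P I"
  shows "depth_zero P I"
  using regular_seq_common_zero[OF assms(1,2)] assms(3)
  unfolding depth_zero_def free_ideal_def Zset_def by blast

definition principal_ideal :: "'a::topological_space set set \<Rightarrow> ('a \<Rightarrow> real) \<Rightarrow> ('a \<Rightarrow> real) set" where
  "principal_ideal P g = {(\<lambda>y. r y * g y) | r. r \<in> CP P}"

lemma ring_ideal_principal_ideal: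
  assumes P: "closed_set_ideal P" and "g \<in> CP P"
  shows "ring_ideal P (principal_ideal P g)"
  unfolding ring_ideal_def
proof (intro conjI ballI)
  show "principal_ideal P g \<subseteq> CP P"
    using CP_mult[OF P _ assms(2)] unfolding principal_ideal_def by blast
  show "(\<lambda>x. 0) \<in> principal_ideal P g"
    using CP_const[OF P, of 0] unfolding principal_ideal_def by force
next
  fix f h assume "f \<in> principal_ideal P g" "h \<in> principal_ideal P g"
  then obtain r s where "r \<in> CP P" "s \<in> CP P" "f = (\<lambda>y. r y * g y)" "h = (\<lambda>y. s y * g y)"
    unfolding principal_ideal_def by blast
  then show "(\<lambda>x. f x - h x) \<in> principal_ideal P g"
    using CP_diff[OF P] unfolding principal_ideal_def
    by (auto intro!: exI[of _ "\<lambda>y. r y - s y"] simp: algebra_simps)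
next
  fix q f assume "q \<in> CP P" "f \<in> principal_ideal P g"
  then obtain r where "r \<in> CP P" "f = (\<lambda>y. r y * g y)"
    unfolding principal_ideal_def by blast
  then show "(\<lambda>x. q x * f x) \<in> principal_ideal P g"
    using CP_mult[OF P \<open>q \<in> CP P\<close> \<open>r \<in> CP P\<close>] unfolding principal_ideal_def
    by (auto intro!: exI[of _ "\<lambda>y. q y * r y"] simp: algebra_simps)
qed

lemma depth_zero_if_essential:
  assumes P: "closed_set_ideal P" and chi: "\<forall>x. indicator {x} \<in> CP P"
    and ess: "essential_ideal P I"
  shows "depth_zero P I"
  unfolding depth_zero_def
proof clarify
  fix as assume "as \<noteq> []" "regular_seq P I as"
  have I: "ring_ideal P I"
    using ess unfolding essential_ideal_def by blast
  obtain x where x: "\<forall>f\<in>I. f x = 0"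
    using regular_seq_common_zero[OF P chi I \<open>regular_seq P I as\<close> \<open>as \<noteq> []\<close>] by blast
  let ?J = "principal_ideal P (indicator {x})"
  have J: "ring_ideal P ?J"
    using ring_ideal_principal_ideal[OF P chi[rule_format]] .
  have "indicator {x} \<in> ?J"
    using CP_const[OF P, of 1] unfolding principal_ideal_def by force
  then have "?J \<noteq> {\<lambda>x. 0}"
    by (metis indicator_simps(1) insertI1 singletonD zero_neq_one)
  have "I \<inter> ?J \<subseteq> {\<lambda>x. 0}"
  proof
    fix f assume f: "f \<in> I \<inter> ?J"
    then obtain r where r: "f = (\<lambda>y. r y * indicator {x} y)"
      unfolding principal_ideal_def by blast
    then have "r x = 0"
      using x f by auto
    then show "f \<in> {\<lambda>x. 0}"
      using r by (auto simp: fun_eq_iff indicator_def)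
  qed
  moreover have "(\<lambda>x. 0) \<in> I \<inter> ?J"
    using ring_ideal_zero[OF I] ring_ideal_zero[OF J] by blast
  ultimately show False
    using ess J \<open>?J \<noteq> {\<lambda>x. 0}\<close> unfolding essential_ideal_def by blast
qed

lemma depth_zero_if_maximal:
  assumes P: "closed_set_ideal P" and chi: "\<forall>x. indicator {x} \<in> CP P"
    and max: "maximal_ideal P I"
  shows "depth_zero P I"
  unfolding depth_zero_def
proof clarify
  fix as assume ne: "as \<noteq> []" and rs: "regular_seq P I as"
  have I: "ring_ideal P I"
    using max unfolding maximal_ideal_def by blast
  obtain x where "\<forall>f\<in>I. f x = 0"
    using regular_seq_common_zero[OF P chi I rs ne] by blast
  then have "I \<subseteq> vanishing_ideal P x"
    using ring_ideal_subset[OF I] unfolding vanishing_ideal_def by blast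
  moreover have "vanishing_ideal P x \<noteq> CP P"
    using CP_const[OF P, of 1] unfolding vanishing_ideal_def by auto
  ultimately have "I = vanishing_ideal P x"
    using max ring_ideal_vanishing_ideal[OF P] unfolding maximal_ideal_def by blast
  with depth_zero_vanishing_ideal[OF P chi] ne rs show False
    unfolding depth_zero_def by blast
qed

lemma depth_zero_if_prime:
  assumes P: "closed_set_ideal P" and chi: "\<forall>x. indicator {x} \<in> CP P"
    and prime: "prime_ideal P I"
  shows "depth_zero P I"
  unfolding depth_zero_def
proof clarify
  fix as assume ne: "as \<noteq> []" and rs: "regular_seq P I as"
  have I: "ring_ideal P I"
    using prime unfolding prime_ideal_def by blast
  obtain x where x: "\<forall>f\<in>I. f x = 0"
    using regular_seq_common_zero[OF P chi I rs ne] by blast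
  let ?u = "\<lambda>y. 1 - indicator {x} y :: real"
  have u: "?u \<in> CP P"
    using CP_diff[OF P CP_const[OF P] chi[rule_format]] .
  have "(\<lambda>y. indicator {x} y * ?u y) = (\<lambda>y. 0)"
    by (auto simp: fun_eq_iff indicator_def)
  then have "(\<lambda>y. indicator {x} y * ?u y) \<in> I"
    using ring_ideal_zero[OF I] by simp
  moreover have "\<And>f g. f \<in> CP P \<Longrightarrow> g \<in> CP P \<Longrightarrow> (\<lambda>x. f x * g x) \<in> I \<Longrightarrow> f \<in> I \<or> g \<in> I"
    using prime unfolding prime_ideal_def by blast
  ultimately have "indicator {x} \<in> I \<or> ?u \<in> I"
    using chi u by blast
  moreover have "indicator {x} \<notin> I"
    using x by force
  ultimately have "?u \<in> I"
    by blast
  have "I = vanishing_ideal P x"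
  proof
    show "I \<subseteq> vanishing_ideal P x"
      using ring_ideal_subset[OF I] x unfolding vanishing_ideal_def by blast
    show "vanishing_ideal P x \<subseteq> I"
    proof
      fix f assume f: "f \<in> vanishing_ideal P x"
      then have "f \<in> CP P"
        unfolding vanishing_ideal_def by blast
      then have "(\<lambda>y. f y * ?u y) \<in> I"
        by (rule ring_ideal_mult[OF I _ \<open>?u \<in> I\<close>])
      moreover have "(\<lambda>y. f y * ?u y) = f"
        using f by (auto simp: fun_eq_iff indicator_def vanishing_ideal_def)
      ultimately show "f \<in> I"
        by simp
    qed
  qed
  with depth_zero_vanishing_ideal[OF P chi] ne rs show False
    unfolding depth_zero_def by blast
qed

theorem theorem4p6:
  fixes P :: "'a::t1_space set set"
  assumes "closed_set_ideal P"
    and "\<forall>x. (\<lambda>y. if y = x then 1 else 0) \<in> CP P"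
  shows "(\<forall>I. free_ideal P I \<or> essential_ideal P I \<longrightarrow> depth_zero P I) \<and>
         (\<forall>I. maximal_ideal P I \<longrightarrow> depth_zero P I) \<and>
         (\<forall>I. prime_ideal P I \<longrightarrow> depth_zero P I)"
proof -
  have "indicator {x} = (\<lambda>y. if y = x then 1 else (0::real))" for x :: 'a
    by (auto simp: fun_eq_iff indicator_def)
  then have chi: "\<forall>x. indicator {x} \<in> CP P"
    using assms(2) by simp
  show ?thesis
    using depth_zero_if_free[OF assms(1) chi] depth_zero_if_essential[OF assms(1) chi]
      depth_zero_if_maximal[OF assms(1) chi] depth_zero_if_prime[OF assms(1) chi]
    by blast
qed

end
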